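(* Let $x$ be a Bertrand D-curve and $x_1$ a Bertrand partner D-curve of $x$. Then: (i) if $x$ is a geodesic curve, the geodesic curvature of $x_1$ is $k_{g_1} = \lambda\tau_g^2(\cos\theta - \lambda\tau_g\sin\theta)\left(\dfrac{ds}{ds_1}\right)^3$; (ii) if $x$ is a principal line, then $k_{g_1} = k_g(1+\lambda k_g)^2\cos\theta\left(\dfrac{ds}{ds_1}\right)^3$.
   Context: For a unit-speed curve $x(s)$ on an oriented surface $S\subset\mathbb{E}^3$, the Darboux frame is $\{T,g,n\}$ ($T$ unit tangent, $n$ unit surface normal along the curve, $g=n\times T$), with $\dot T = k_g g + k_n n$, $\dot g = -k_g T + \tau_g n$, $\dot n = -k_n T - \tau_g g$; $k_g,k_n,\tau_g$ are the geodesic curvature, normal curvature and geodesic torsion. For $x_1(s_1)$ on an oriented surface $S_1$ the analogous objects carry subscript $1$. $x$ is a Bertrand D-curve with Bertrand partner D-curve $x_1$ if there is a correspondence of points such that at corresponding points $g$ coincides with $g_1$; then $x(s)=x_1(s_1)+\lambda g_1(s_1)$ with $\lambda$ a nonzero constant, and $s$ is a function of $s_1$. $\theta$ is the angle between $T$ and $T_1$, oriented so that $T_1=\cos\theta\,T+\sin\theta\,n$, $n_1=-\sin\theta\,T+\cos\theta\,n$. Geodesic means $k_g=0$; principal line means $\tau_g=0$. *)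

theory Defs
  imports "HOL-Analysis.Analysis"
begin

text \<open>Darboux frame data along a unit-speed curve x(s), s in an open parameter
set I, lying on an oriented surface: T unit tangent, n unit surface normal
along the curve, g = n x T, with the Darboux frame equations
T' = kg g + kn n,  g' = -kg T + tg n,  n' = -kn T - tg g.\<close>

definition darboux_curve ::
  "real set \<Rightarrow> (real \<Rightarrow> real^3) \<Rightarrow> (real \<Rightarrow> real^3) \<Rightarrow> (real \<Rightarrow> real^3)
   \<Rightarrow> (real \<Rightarrow> real^3) \<Rightarrow> (real \<Rightarrow> real) \<Rightarrow> (real \<Rightarrow> real) \<Rightarrow> (real \<Rightarrow> real) \<Rightarrow> bool"
where
  "darboux_curve I x T g n kg kn tg \<longleftrightarrow>
     open I \<and>
     (\<forall>s\<in>I.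
        (x has_vector_derivative T s) (at s) \<and>
        norm (T s) = 1 \<and> norm (n s) = 1 \<and> T s \<bullet> n s = 0 \<and>
        g s = cross3 (n s) (T s) \<and>
        (T has_vector_derivative (kg s *\<^sub>R g s + kn s *\<^sub>R n s)) (at s) \<and>
        (g has_vector_derivative (- kg s *\<^sub>R T s + tg s *\<^sub>R n s)) (at s) \<and>
        (n has_vector_derivative (- kn s *\<^sub>R T s - tg s *\<^sub>R g s)) (at s))"

text \<open>x (parameter s in I, via s = phi s1) is a Bertrand D-curve with Bertrand
partner D-curve x1 (parameter s1 in I1): at corresponding points g = g1 and
x(s) = x1(s1) + lambda g1(s1), lambda a nonzero constant; s = phi(s1) is a
differentiable function of s1 with derivative dphi = ds/ds1.\<close>

definition bertrand_D_pair ::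
  "real set \<Rightarrow> (real \<Rightarrow> real^3) \<Rightarrow> (real \<Rightarrow> real^3) \<Rightarrow>
   real set \<Rightarrow> (real \<Rightarrow> real^3) \<Rightarrow> (real \<Rightarrow> real^3) \<Rightarrow>
   real \<Rightarrow> (real \<Rightarrow> real) \<Rightarrow> (real \<Rightarrow> real) \<Rightarrow> bool"
where
  "bertrand_D_pair I x g I1 x1 g1 lam phi dphi \<longleftrightarrow>
     lam \<noteq> 0 \<and>
     (\<forall>s1\<in>I1.
        phi s1 \<in> I \<and>
        (phi has_real_derivative dphi s1) (at s1) \<and>
        g (phi s1) = g1 s1 \<and>
        x (phi s1) = x1 s1 + lam *\<^sub>R g1 s1)"

end

theory Submission
  imports Defs
begin

text \<open>Differentiating g1 = g o phi and x1 = x o phi - lambda g o phi with the Darboux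
equations expresses T1 and g1' in the frame T, n of x. Comparing T1 with its angle
representation gives cos theta = phi' (1 + lambda kg) and sin theta = - phi' lambda tg, and the
tangential component of g1' gives kg1 = phi' (kg cos theta - tg sin theta). In either special
case, cos^2 theta + sin^2 theta = 1 turns this into the stated formula.\<close>

lemma inner_orthonormal_combination:
  fixes u v :: "'a::real_inner"
  assumes "u \<bullet> u = 1" "v \<bullet> v = 1" "u \<bullet> v = 0"
  shows "(a *\<^sub>R u + b *\<^sub>R v) \<bullet> u = a" "(a *\<^sub>R u + b *\<^sub>R v) \<bullet> v = b"
  using assms by (simp_all add: inner_add_left inner_commute[of v u])

lemma darboux_curve_frame_inner:
  assumes "darboux_curve I x T g n kg kn tg" "s \<in> I"
  shows "T s \<bullet> T s = 1" "n s \<bullet> n s = 1" "T s \<bullet> n s = 0"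
  using assms by (auto simp: darboux_curve_def dot_square_norm)

lemma bertrand_D_derivatives:
  assumes D: "darboux_curve I x T g n kg kn tg"
    and D1: "darboux_curve I1 x1 T1 g1 n1 kg1 kn1 tg1"
    and B: "bertrand_D_pair I x g I1 x1 g1 lam phi dphi"
    and s1: "s1 \<in> I1"
  defines "s \<equiv> phi s1"
  shows "T1 s1 = (dphi s1 * (1 + lam * kg s)) *\<^sub>R T s + (- dphi s1 * lam * tg s) *\<^sub>R n s"
    and "- kg1 s1 *\<^sub>R T1 s1 + tg1 s1 *\<^sub>R n1 s1
           = dphi s1 *\<^sub>R (- kg s *\<^sub>R T s + tg s *\<^sub>R n s)"
proof -
  have "open I1" using D1 by (simp add: darboux_curve_def)
  have sI: "s \<in> I" and "(phi has_real_derivative dphi s1) (at s1)"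
    using B s1 by (auto simp: bertrand_D_pair_def s_def)
  then have phi': "(phi has_vector_derivative dphi s1) (at s1)"
    by (simp add: has_real_derivative_iff_has_vector_derivative)
  have x': "(x has_vector_derivative T s) (at s)"
    and g': "(g has_vector_derivative (- kg s *\<^sub>R T s + tg s *\<^sub>R n s)) (at s)"
    using D sI by (auto simp: darboux_curve_def)
  have x1': "(x1 has_vector_derivative T1 s1) (at s1)"
    and g1': "(g1 has_vector_derivative (- kg1 s1 *\<^sub>R T1 s1 + tg1 s1 *\<^sub>R n1 s1)) (at s1)"
    using D1 s1 by (auto simp: darboux_curve_def)
  have g_phi: "((g \<circ> phi) has_vector_derivative dphi s1 *\<^sub>R (- kg s *\<^sub>R T s + tg s *\<^sub>R n s)) (at s1)"
    using vector_diff_chain_at[OF phi' g'[unfolded s_def]] by (simp add: s_def)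
  have x_phi: "((x \<circ> phi) has_vector_derivative dphi s1 *\<^sub>R T s) (at s1)"
    using vector_diff_chain_at[OF phi' x'[unfolded s_def]] by (simp add: s_def)
  have "((\<lambda>t. (x \<circ> phi) t - lam *\<^sub>R (g \<circ> phi) t) has_vector_derivative
          dphi s1 *\<^sub>R T s - lam *\<^sub>R (dphi s1 *\<^sub>R (- kg s *\<^sub>R T s + tg s *\<^sub>R n s))) (at s1)"
    by (rule has_vector_derivative_diff[OF x_phi
          has_vector_derivative_eq_rhs[OF has_vector_derivative_scaleR[OF DERIV_const g_phi]]]) simp
  moreover have "(x \<circ> phi) t - lam *\<^sub>R (g \<circ> phi) t = x1 t" if "t \<in> I1" for t
    using B that by (simp add: bertrand_D_pair_def)
  ultimately have "(x1 has_vector_derivative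
          dphi s1 *\<^sub>R T s - lam *\<^sub>R (dphi s1 *\<^sub>R (- kg s *\<^sub>R T s + tg s *\<^sub>R n s))) (at s1)"
    using has_vector_derivative_transform_within_open \<open>open I1\<close> s1 by blast
  then show "T1 s1 = (dphi s1 * (1 + lam * kg s)) *\<^sub>R T s + (- dphi s1 * lam * tg s) *\<^sub>R n s"
    using vector_derivative_unique_at[OF x1'] by (simp add: algebra_simps)
  have "(g \<circ> phi) t = g1 t" if "t \<in> I1" for t
    using B that by (simp add: bertrand_D_pair_def)
  then have "(g1 has_vector_derivative dphi s1 *\<^sub>R (- kg s *\<^sub>R T s + tg s *\<^sub>R n s)) (at s1)"
    using has_vector_derivative_transform_within_open[OF g_phi \<open>open I1\<close> s1] by blast
  then show "- kg1 s1 *\<^sub>R T1 s1 + tg1 s1 *\<^sub>R n1 s1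
           = dphi s1 *\<^sub>R (- kg s *\<^sub>R T s + tg s *\<^sub>R n s)"
    using vector_derivative_unique_at[OF g1'] by simp
qed

lemma bertrand_D_angle_relations:
  fixes \<theta> :: real
  assumes D: "darboux_curve I x T g n kg kn tg"
    and D1: "darboux_curve I1 x1 T1 g1 n1 kg1 kn1 tg1"
    and B: "bertrand_D_pair I x g I1 x1 g1 lam phi dphi"
    and s1: "s1 \<in> I1"
    and angT: "T1 s1 = cos \<theta> *\<^sub>R T (phi s1) + sin \<theta> *\<^sub>R n (phi s1)"
  defines "s \<equiv> phi s1"
  shows "cos \<theta> = dphi s1 * (1 + lam * kg s)"
    and "sin \<theta> = - dphi s1 * lam * tg s"
    and "kg1 s1 = dphi s1 * (kg s * cos \<theta> - tg s * sin \<theta>)"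
proof -
  have "s \<in> I" using B s1 by (simp add: bertrand_D_pair_def s_def)
  note frame = darboux_curve_frame_inner[OF D this]
  note frame1 = darboux_curve_frame_inner[OF D1 s1]
  note T1 = bertrand_D_derivatives(1)[OF D D1 B s1, folded s_def]
  note angT = angT[folded s_def]
  show cos: "cos \<theta> = dphi s1 * (1 + lam * kg s)"
    using inner_orthonormal_combination(1)[OF frame, of "cos \<theta>" "sin \<theta>"]
          inner_orthonormal_combination(1)[OF frame, of "dphi s1 * (1 + lam * kg s)"]
    by (metis T1 angT)
  show sin: "sin \<theta> = - dphi s1 * lam * tg s"
    using inner_orthonormal_combination(2)[OF frame, of "cos \<theta>" "sin \<theta>"]
          inner_orthonormal_combination(2)[OF frame, of _ "- dphi s1 * lam * tg s"]
    by (metis T1 angT)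
  have "- kg1 s1 = (- kg1 s1 *\<^sub>R T1 s1 + tg1 s1 *\<^sub>R n1 s1) \<bullet> T1 s1"
    by (rule inner_orthonormal_combination(1)[OF frame1, symmetric])
  also have "\<dots> = (dphi s1 *\<^sub>R (- kg s *\<^sub>R T s + tg s *\<^sub>R n s)) \<bullet> T1 s1"
    by (simp only: bertrand_D_derivatives(2)[OF D D1 B s1, folded s_def])
  also have "\<dots> = dphi s1 * (- kg s * cos \<theta> + tg s * sin \<theta>)"
    using frame by (simp add: angT inner_add_left inner_add_right inner_commute algebra_simps)
  finally show "kg1 s1 = dphi s1 * (kg s * cos \<theta> - tg s * sin \<theta>)"
    by (simp add: algebra_simps)
qed

lemma geodesic_curvature_of_partner_of_geodesic:
  fixes \<theta> :: real
  assumes "cos \<theta> = d * (1 + lam * k)" "sin \<theta> = - d * lam * t"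
    and "k1 = d * (k * cos \<theta> - t * sin \<theta>)" "k = 0"
  shows "k1 = lam * t\<^sup>2 * (cos \<theta> - lam * t * sin \<theta>) * d ^ 3"
proof -
  have pyth: "d\<^sup>2 * (1 + lam\<^sup>2 * t\<^sup>2) = 1"
    using sin_cos_squared_add[of \<theta>] assms by (simp add: power_mult_distrib algebra_simps)
  have "lam * t\<^sup>2 * (cos \<theta> - lam * t * sin \<theta>) * d ^ 3
          = lam * d\<^sup>2 * t\<^sup>2 * (d\<^sup>2 * (1 + lam\<^sup>2 * t\<^sup>2))"
    using assms by (simp add: power2_eq_square power3_eq_cube algebra_simps)
  also have "\<dots> = k1"
    using assms pyth by (simp add: power2_eq_square)
  finally show ?thesis ..
qed

lemma geodesic_curvature_of_partner_of_principal_line: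
  fixes \<theta> :: real
  assumes "cos \<theta> = d * (1 + lam * k)" "sin \<theta> = - d * lam * t"
    and "k1 = d * (k * cos \<theta> - t * sin \<theta>)" "t = 0"
  shows "k1 = k * (1 + lam * k)\<^sup>2 * cos \<theta> * d ^ 3"
proof -
  have pyth: "(d * (1 + lam * k))\<^sup>2 = 1"
    using sin_cos_squared_add[of \<theta>] assms by simp
  have "k * (1 + lam * k)\<^sup>2 * cos \<theta> * d ^ 3 = d * k * cos \<theta> * (d * (1 + lam * k))\<^sup>2"
    by (simp add: power2_eq_square power3_eq_cube algebra_simps)
  also have "\<dots> = k1"
    using assms pyth by simp
  finally show ?thesis ..
qed

theorem corollary3:
  fixes x T g n x1 T1 g1 n1 :: "real \<Rightarrow> real^3"
    and kg kn tg kg1 kn1 tg1 phi dphi theta :: "real \<Rightarrow> real"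
    and I I1 :: "real set" and lam :: real
  assumes D: "darboux_curve I x T g n kg kn tg"
    and D1: "darboux_curve I1 x1 T1 g1 n1 kg1 kn1 tg1"
    and B: "bertrand_D_pair I x g I1 x1 g1 lam phi dphi"
    and angT: "\<forall>s1\<in>I1. T1 s1 = cos (theta s1) *\<^sub>R T (phi s1) + sin (theta s1) *\<^sub>R n (phi s1)"
    and angN: "\<forall>s1\<in>I1. n1 s1 = - sin (theta s1) *\<^sub>R T (phi s1) + cos (theta s1) *\<^sub>R n (phi s1)"
  shows "((\<forall>s\<in>I. kg s = 0) \<longrightarrow>
            (\<forall>s1\<in>I1. kg1 s1 = lam * (tg (phi s1))\<^sup>2 *
               (cos (theta s1) - lam * tg (phi s1) * sin (theta s1)) * (dphi s1) ^ 3))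
       \<and> ((\<forall>s\<in>I. tg s = 0) \<longrightarrow>
            (\<forall>s1\<in>I1. kg1 s1 = kg (phi s1) * (1 + lam * kg (phi s1))\<^sup>2 *
               cos (theta s1) * (dphi s1) ^ 3))"
proof (intro conjI impI ballI)
  fix s1 assume "s1 \<in> I1"
  then have "phi s1 \<in> I" using B by (simp add: bertrand_D_pair_def)
  note rel = bertrand_D_angle_relations[OF D D1 B \<open>s1 \<in> I1\<close>, of "theta s1"]
  note rel = rel[OF angT[rule_format, OF \<open>s1 \<in> I1\<close>]]
  { assume "\<forall>s\<in>I. kg s = 0"
    with \<open>phi s1 \<in> I\<close> show "kg1 s1 = lam * (tg (phi s1))\<^sup>2 *
               (cos (theta s1) - lam * tg (phi s1) * sin (theta s1)) * (dphi s1) ^ 3"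
      by (intro geodesic_curvature_of_partner_of_geodesic[OF rel]) simp }
  { assume "\<forall>s\<in>I. tg s = 0"
    with \<open>phi s1 \<in> I\<close> show "kg1 s1 = kg (phi s1) * (1 + lam * kg (phi s1))\<^sup>2 *
               cos (theta s1) * (dphi s1) ^ 3"
      by (intro geodesic_curvature_of_partner_of_principal_line[OF rel]) simp }
qed

end
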